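(* Let $D$ be a euclidean polygon with a straight triangulation $\mathcal{T}$, and let $k\ge0$ be an integer. Let $P$ be a set of at most $2^k$ points in $D$. Then there is a realisation of $\mathcal{T}^{(k+1)}$ as a straight triangulation of $D$ that contains $P$ in its vertex set.
   Context: A triangulation of a subset of euclidean space is straight if the inclusion of each simplex is an affine map. $\mathcal{T}^{(n)}$ denotes the $n$-fold iterated barycentric subdivision; a realisation of it as a straight triangulation of $D$ is a straight triangulation of $D$ subdividing $\mathcal{T}$ that is combinatorially the $n$-fold barycentric subdivision, the new vertex of each subdivided simplex being placed at some (not necessarily barycentric) point of its interior. *)

theory Defs
  imports "HOL-Analysis.Analysis"
begin

text \<open>A euclidean polygon: a compact region of the plane bounded by a simple closed
polygonal curve, i.e. a set homeomorphic to the closed disc (polygonality of the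
boundary is then supplied by the straight triangulation in the hypothesis).\<close>
definition euclidean_polygon :: "(real^2) set \<Rightarrow> bool" where
  "euclidean_polygon D \<longleftrightarrow> D homeomorphic cball (0::real^2) 1"

text \<open>Simplices are represented by their point sets (convex hulls of affinely independent
vertex sets); the complex is closed under faces (and contains the empty face).\<close>
definition straight_triangulation :: "'a::euclidean_space set set \<Rightarrow> 'a set \<Rightarrow> bool" where
  "straight_triangulation \<T> D \<longleftrightarrow> simplicial_complex \<T> \<and> \<Union>\<T> = D"

definition tri_vertices :: "'a::euclidean_space set set \<Rightarrow> 'a set" where
  "tri_vertices \<T> = {x. {x} \<in> \<T>}"

text \<open>S is a realisation of the (first) barycentric subdivision of T: a new vertex c(s) is
placed at some point of the relative interior of each nonempty simplex s of T, and the
simplices of S are the convex hulls of c applied to chains s0 < s1 < ... of simplices of T.\<close>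
definition derived_subdivision :: "'a::euclidean_space set set \<Rightarrow> 'a set set \<Rightarrow> bool" where
  "derived_subdivision \<T> \<S> \<longleftrightarrow>
     (\<exists>c. (\<forall>s\<in>\<T>. s \<noteq> {} \<longrightarrow> c s \<in> rel_interior s) \<and>
          \<S> = {convex hull (c ` F) | F. F \<subseteq> \<T> - {{}} \<and>
                                       (\<forall>A\<in>F. \<forall>B\<in>F. A \<subseteq> B \<or> B \<subseteq> A)}) \<and>
     straight_triangulation \<S> (\<Union>\<T>)"

fun realises_iterated_bsd :: "'a::euclidean_space set set \<Rightarrow> nat \<Rightarrow> 'a set set \<Rightarrow> bool" where
  "realises_iterated_bsd \<T> 0 \<S> = (\<S> = \<T>)"
| "realises_iterated_bsd \<T> (Suc n) \<S> =
     (\<exists>\<R>. realises_iterated_bsd \<T> n \<R> \<and> derived_subdivision \<R> \<S>)"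

end

theory Submission
  imports Defs
begin

(* Choose the new vertex c t of every simplex t with care. If a simplex of the derived subdivision
   comes from the chain F, with largest member t and second largest g, then its relative interior lies
   in the open join of c t with the relative interior of g. So if, for every proper face g of t, this
   open join contains at most half of the points of P in the relative interior of t, then one derived
   subdivision halves the largest number of points of P in the relative interior of a
   positive-dimensional simplex. In dimension at most two such centres exist by median arguments:
   on an edge take the median point; in a triangle first take the cevian from a vertex in the median
   direction, then the point of median depth on it. Starting from 2^k points, after k + 1 subdivisions
   no point of P is interior to a positive-dimensional simplex, so all of them are vertices. *)

definition open_join :: "'a::euclidean_space \<Rightarrow> 'a set \<Rightarrow> 'a set" where
  "open_join z f = {u *\<^sub>R z + (1 - u) *\<^sub>R y | u y. 0 < u \<and> u < 1 \<and> y \<in> rel_interior f}"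

lemma open_join_mono: "rel_interior f \<subseteq> rel_interior g \<Longrightarrow> open_join z f \<subseteq> open_join z g"
  unfolding open_join_def by blast

lemma open_join_singleton: "open_join z {v} = {u *\<^sub>R z + (1 - u) *\<^sub>R v | u. 0 < (u::real) \<and> u < 1}"
  by (auto simp: open_join_def)

lemma open_join_subset_rel_interior:
  assumes "convex S" "z \<in> rel_interior S" "f \<subseteq> closure S"
  shows "open_join z f \<subseteq> rel_interior S"
proof
  fix p assume "p \<in> open_join z f"
  then obtain u y where uy: "0 < u" "u < 1" "y \<in> rel_interior f" "p = u *\<^sub>R z + (1 - u) *\<^sub>R y"
    unfolding open_join_def by blast
  have "y \<in> closure S" using uy(3) rel_interior_subset assms(3) by blast
  then have "y - u *\<^sub>R (y - z) \<in> rel_interior S"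
    using rel_interior_closure_convex_shrink[OF assms(1,2)] uy(1,2) by simp
  moreover have "y - u *\<^sub>R (y - z) = p" using uy(4) by (simp add: algebra_simps)
  ultimately show "p \<in> rel_interior S" by simp
qed

lemma rel_interior_convex_hull_insert_subset_open_join:
  fixes a :: "'a::euclidean_space"
  assumes indep: "\<not> affine_dependent (insert a B)" and "a \<notin> B" "B \<noteq> {}"
  shows "rel_interior (convex hull (insert a B)) \<subseteq> open_join a (convex hull B)"
proof
  fix p assume "p \<in> rel_interior (convex hull (insert a B))"
  then obtain w where w: "\<forall>x\<in>insert a B. 0 < w x" "sum w (insert a B) = 1"
    "(\<Sum>x\<in>insert a B. w x *\<^sub>R x) = p"
    using rel_interior_convex_hull_explicit[OF indep] by blast
  have "finite B" using aff_independent_finite[OF indep] by simp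
  define u where "u = w a"
  have sum_B: "sum w B = 1 - u" using w(2) \<open>finite B\<close> \<open>a \<notin> B\<close> by (simp add: u_def)
  have "0 < sum w B" using w(1) \<open>finite B\<close> \<open>B \<noteq> {}\<close> by (intro sum_pos) auto
  then have u: "0 < u" "u < 1" using w(1) sum_B by (auto simp: u_def)
  define y where "y = (\<Sum>x\<in>B. (w x / (1 - u)) *\<^sub>R x)"
  have "y \<in> rel_interior (convex hull B)"
    unfolding rel_interior_convex_hull_explicit[OF affine_independent_subset[OF indep subset_insertI]]
    using w(1) u sum_B
    by (auto simp: y_def sum_divide_distrib[symmetric] intro!: exI[of _ "\<lambda>x. w x / (1 - u)"])
  moreover have "p = u *\<^sub>R a + (1 - u) *\<^sub>R y"
    using w(3) u \<open>finite B\<close> \<open>a \<notin> B\<close> by (simp add: u_def y_def scaleR_sum_right)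
  ultimately show "p \<in> open_join a (convex hull B)"
    unfolding open_join_def using u by blast
qed

lemma polyhedron_obtain_face_rel_interior:
  fixes S :: "'a::euclidean_space set"
  assumes "polyhedron S" "x \<in> S"
  obtains F where "F face_of S" "x \<in> rel_interior F"
  using assms
proof (induction "nat (aff_dim S)" arbitrary: S thesis rule: less_induct)
  case less
  show ?case
  proof (cases "x \<in> rel_interior S")
    case True
    then show ?thesis using less.prems face_of_refl polyhedron_imp_convex by blast
  next
    case False
    then have "x \<in> rel_frontier S"
      using less.prems closure_subset by (auto simp: rel_frontier_def)
    then obtain G where G: "G face_of S" "G \<noteq> S" "x \<in> G"
      using rel_frontier_of_polyhedron_alt[OF less.prems(2)] by blast
    have "aff_dim G < aff_dim S" "0 \<le> aff_dim G"
      using face_of_aff_dim_lt[OF polyhedron_imp_convex[OF less.prems(2)] G(1,2)] G(3)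
      by (auto simp flip: not_less)
    then have "nat (aff_dim G) < nat (aff_dim S)" by linarith
    with less.hyps obtain F where "F face_of G" "x \<in> rel_interior F"
      using face_of_polyhedron_polyhedron[OF less.prems(2) G(1)] G(3) by blast
    then show ?thesis using less.prems(1) face_of_trans G(1) by blast
  qed
qed

lemma simplicial_complex_obtain_rel_interior:
  assumes "simplicial_complex K" "x \<in> \<Union>K"
  obtains s where "s \<in> K" "x \<in> rel_interior s"
proof -
  obtain t where t: "t \<in> K" "x \<in> t" using assms(2) by blast
  then have "polyhedron t"
    using assms(1) simplex_imp_polytope polytope_imp_polyhedron unfolding simplicial_complex_def by blast
  then obtain s where "s face_of t" "x \<in> rel_interior s"
    using polyhedron_obtain_face_rel_interior t(2) by blast
  then show ?thesis using that assms(1) t(1) by (auto simp: simplicial_complex_def)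
qed

lemma mem_tri_vertices_if_not_in_rel_interiors:
  assumes "simplicial_complex K" "x \<in> \<Union>K"
    and "\<And>s. s \<in> K \<Longrightarrow> 1 \<le> aff_dim s \<Longrightarrow> x \<notin> rel_interior s"
  shows "x \<in> tri_vertices K"
proof -
  obtain s where s: "s \<in> K" "x \<in> rel_interior s"
    using simplicial_complex_obtain_rel_interior[OF assms(1,2)] .
  have "s \<noteq> {}" using s(2) rel_interior_empty by auto
  then have "0 \<le> aff_dim s" by (metis aff_dim_negative_iff not_le)
  moreover have "\<not> 1 \<le> aff_dim s" using assms(3) s by blast
  ultimately have "aff_dim s = 0" by linarith
  then obtain a where "s = {a}" using aff_dim_eq_0 by blast
  then show ?thesis using s by (simp add: tri_vertices_def)
qed

section \<open>Derived subdivisions\<close>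

definition derived_complex :: "('a::euclidean_space set \<Rightarrow> 'a) \<Rightarrow> 'a set set \<Rightarrow> 'a set set" where
  "derived_complex c K = {convex hull (c ` F) | F. F \<subseteq> K - {{}} \<and> chain\<^sub>\<subseteq> F}"

locale simplicial_centres =
  fixes K :: "'a::euclidean_space set set" and c :: "'a set \<Rightarrow> 'a"
  assumes simplicial_complex: "simplicial_complex K"
    and centre_rel_interior: "\<And>s. s \<in> K \<Longrightarrow> s \<noteq> {} \<Longrightarrow> c s \<in> rel_interior s"
begin

(* For a nonempty flag F, the set \<Union>F is its largest member and \<Union>(F - {\<Union>F}) the next one
   (or {} if there is none). *)
definition flag :: "'a set set \<Rightarrow> bool" where
  "flag F \<longleftrightarrow> F \<subseteq> K - {{}} \<and> chain\<^sub>\<subseteq> F"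

lemma derived_complex_eq: "derived_complex c K = {convex hull (c ` F) | F. flag F}"
  by (simp add: derived_complex_def flag_def)

lemma convex_member: "s \<in> K \<Longrightarrow> convex s"
  using simplicial_complex convex_simplex unfolding simplicial_complex_def by blast

lemma face_of_member:
  assumes "s \<in> K" "t \<in> K" "s \<subseteq> t"
  shows "s face_of t"
proof -
  have "(t \<inter> s) face_of t" using simplicial_complex assms(1,2) by (simp add: simplicial_complex_def)
  then show ?thesis using assms(3) by (simp add: Int_absorb1)
qed

lemma subset_if_meets_rel_interior:
  assumes "s \<in> K" "t \<in> K" "t \<inter> rel_interior s \<noteq> {}"
  shows "s \<subseteq> t"
proof -
  have "(s \<inter> t) face_of s" using simplicial_complex assms(1,2) by (simp add: simplicial_complex_def)
  moreover have "(s \<inter> t) \<inter> rel_interior s \<noteq> {}" using assms(3) rel_interior_subset by blast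
  ultimately show ?thesis using subset_of_face_of[of "s \<inter> t" s s] by blast
qed

lemma centre_mem: "s \<in> K \<Longrightarrow> s \<noteq> {} \<Longrightarrow> c s \<in> s"
  using centre_rel_interior rel_interior_subset by blast

lemma finite_flag: "flag F \<Longrightarrow> finite F"
  using simplicial_complex unfolding flag_def simplicial_complex_def by (meson Diff_subset finite_subset)

lemma flag_subset: "flag F \<Longrightarrow> G \<subseteq> F \<Longrightarrow> flag G"
  unfolding flag_def chain_subset_def by blast

lemma flag_insert: "flag G \<Longrightarrow> t \<in> K \<Longrightarrow> t \<noteq> {} \<Longrightarrow> \<Union>G \<subseteq> t \<Longrightarrow> flag (insert t G)"
  unfolding flag_def chain_subset_def by blast

lemma Union_in_flag: "flag F \<Longrightarrow> F \<noteq> {} \<Longrightarrow> \<Union>F \<in> F"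
  by (metis Union_in_chain finite_flag flag_def chain_subset_alt_def)

lemma Union_flag_in_complex: "flag F \<Longrightarrow> F \<noteq> {} \<Longrightarrow> \<Union>F \<in> K \<and> \<Union>F \<noteq> {}"
  using Union_in_flag[of F] unfolding flag_def by blast

lemma convex_hull_flag_subset_Union: "flag F \<Longrightarrow> convex hull (c ` F) \<subseteq> \<Union>F"
proof (cases "F = {}")
  case False
  assume "flag F"
  then have "c s \<in> \<Union>F" if "s \<in> F" for s
    using centre_mem that unfolding flag_def by blast
  moreover have "convex (\<Union>F)" using convex_member Union_flag_in_complex[OF \<open>flag F\<close> False] by blast
  ultimately show ?thesis by (simp add: hull_minimal image_subset_iff)
qed simp

lemma flag_below_top_face_of:
  assumes "flag F" "F \<noteq> {}"
  shows "\<Union>(F - {\<Union>F}) face_of \<Union>F" "\<Union>(F - {\<Union>F}) \<noteq> \<Union>F"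
proof -
  have G: "flag (F - {\<Union>F})" using flag_subset[OF assms(1)] by blast
  have top: "\<Union>F \<in> K" "\<Union>F \<noteq> {}" using Union_flag_in_complex[OF assms] by auto
  show "\<Union>(F - {\<Union>F}) face_of \<Union>F"
  proof (cases "F - {\<Union>F} = {}")
    case False
    then have "\<Union>(F - {\<Union>F}) \<in> K" using Union_flag_in_complex[OF G] by blast
    then show ?thesis using top face_of_member by blast
  qed (simp only: Union_empty empty_face_of)
  show "\<Union>(F - {\<Union>F}) \<noteq> \<Union>F"
  proof (cases "F - {\<Union>F} = {}")
    case False
    then show ?thesis using Union_in_flag[OF G] by blast
  next
    case True
    then show ?thesis using top(2) by (metis Union_empty)
  qed
qed

lemma convex_hull_flag_below_top_subset_rel_frontier:
  assumes "flag F" "F \<noteq> {}"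
  shows "convex hull (c ` (F - {\<Union>F})) \<subseteq> rel_frontier (\<Union>F)"
proof -
  have "convex hull (c ` (F - {\<Union>F})) \<subseteq> \<Union>(F - {\<Union>F})"
    by (rule convex_hull_flag_subset_Union[OF flag_subset[OF assms(1) Diff_subset]])
  also have "\<dots> \<subseteq> rel_frontier (\<Union>F)"
    by (rule face_of_subset_rel_frontier[OF flag_below_top_face_of[OF assms]])
  finally show ?thesis .
qed

lemma centre_top_notin_affine_hull_below:
  assumes "flag F" "F \<noteq> {}"
  shows "c (\<Union>F) \<notin> affine hull (c ` (F - {\<Union>F}))"
proof -
  have top: "\<Union>F \<in> K" "\<Union>F \<noteq> {}" using Union_flag_in_complex[OF assms] by auto
  have "c ` (F - {\<Union>F}) \<subseteq> \<Union>(F - {\<Union>F})"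
    by (rule subset_trans[OF hull_subset
          convex_hull_flag_subset_Union[OF flag_subset[OF assms(1) Diff_subset]]])
  then have "affine hull (c ` (F - {\<Union>F})) \<subseteq> affine hull \<Union>(F - {\<Union>F})" by (rule hull_mono)
  moreover have "affine hull \<Union>(F - {\<Union>F}) \<inter> rel_interior (\<Union>F) = {}"
    by (rule affine_hull_face_of_disjoint_rel_interior[OF convex_member[OF top(1)]
          flag_below_top_face_of[OF assms]])
  ultimately show ?thesis using centre_rel_interior[OF top] by blast
qed

lemma centres_insert_top: "\<Union>F \<in> F \<Longrightarrow> c ` F = insert (c (\<Union>F)) (c ` (F - {\<Union>F}))"
  by blast

lemma card_flag_below_top_less: "flag F \<Longrightarrow> F \<noteq> {} \<Longrightarrow> card (F - {\<Union>F}) < card F"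
  using finite_flag Union_in_flag by (meson card_Diff1_less)

lemma convex_hull_flag_insert_top:
  assumes "flag F" "F \<noteq> {}"
  shows "convex hull (c ` F) = convex hull (insert (c (\<Union>F)) (convex hull (c ` (F - {\<Union>F}))))"
  using centres_insert_top[OF Union_in_flag[OF assms]] hull_insert by metis

lemma affine_independent_centres: "flag F \<Longrightarrow> \<not> affine_dependent (c ` F)"
proof (induction "card F" arbitrary: F rule: less_induct)
  case less
  show ?case
  proof (cases "F = {}")
    case False
    have "card (F - {\<Union>F}) < card F" using card_flag_below_top_less[OF less.prems False] .
    then have "\<not> affine_dependent (c ` (F - {\<Union>F}))"
      using less.hyps flag_subset[OF less.prems] by blast
    then show ?thesis
      using affine_independent_insert centre_top_notin_affine_hull_below[OF less.prems False]
        centres_insert_top[OF Union_in_flag[OF less.prems False]] by metis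
  qed simp
qed

lemma convex_hull_flag_Int_drop_top:
  assumes F: "flag F" "F \<noteq> {}" and F': "flag F'" and dis: "\<Union>F' \<inter> rel_interior (\<Union>F) = {}"
  shows "convex hull (c ` F) \<inter> convex hull (c ` F') = convex hull (c ` (F - {\<Union>F})) \<inter> convex hull (c ` F')"
    and "\<Union>F \<notin> F'"
proof -
  have top: "\<Union>F \<in> K" "\<Union>F \<noteq> {}" using Union_flag_in_complex[OF F] by auto
  have "convex hull (c ` (F - {\<Union>F})) \<subseteq> \<Union>F"
    using convex_hull_flag_subset_Union[OF flag_subset[OF F(1) Diff_subset]] by blast
  moreover have "disjnt (convex hull (c ` F')) (rel_interior (\<Union>F))"
    using convex_hull_flag_subset_Union[OF F'] dis unfolding disjnt_def by blast
  ultimately have "convex hull (c ` F') \<inter> convex hull (insert (c (\<Union>F)) (convex hull (c ` (F - {\<Union>F})))) =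
                   convex hull (c ` F') \<inter> convex hull (convex hull (c ` (F - {\<Union>F})))"
    by (rule Int_convex_hull_insert_rel_exterior[OF convex_member[OF top(1)] _ centre_rel_interior[OF top]])
  then show "convex hull (c ` F) \<inter> convex hull (c ` F') = convex hull (c ` (F - {\<Union>F})) \<inter> convex hull (c ` F')"
    using convex_hull_flag_insert_top[OF F] by (simp add: Int_commute)
  have "rel_interior (\<Union>F) \<noteq> {}"
    using rel_interior_eq_empty convex_member[OF top(1)] top(2) by blast
  then show "\<Union>F \<notin> F'"
    using dis rel_interior_subset by blast
qed

lemma convex_hull_flag_Int_same_top:
  assumes F: "flag F" "F \<noteq> {}" and F': "flag F'" "F' \<noteq> {}" and eq: "\<Union>F' = \<Union>F"
  shows "convex hull (c ` F) \<inter> convex hull (c ` F') =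
         convex hull (insert (c (\<Union>F)) (convex hull (c ` (F - {\<Union>F})) \<inter> convex hull (c ` (F' - {\<Union>F}))))"
proof -
  have top: "\<Union>F \<in> K" "\<Union>F \<noteq> {}" using Union_flag_in_complex[OF F] by auto
  show ?thesis
    using convex_hull_insert_Int_eq[OF centre_rel_interior[OF top]
        convex_hull_flag_below_top_subset_rel_frontier[OF F]
        convex_hull_flag_below_top_subset_rel_frontier[OF F', unfolded eq]
        convex_member[OF top(1)] convex_convex_hull convex_convex_hull]
      convex_hull_flag_insert_top[OF F] convex_hull_flag_insert_top[OF F', unfolded eq]
    by argo
qed

lemma flag_tops_cases:
  assumes "flag F" "F \<noteq> {}" "flag F'" "F' \<noteq> {}"
  obtains "\<Union>F' = \<Union>F" | "\<Union>F' \<inter> rel_interior (\<Union>F) = {}" | "\<Union>F \<inter> rel_interior (\<Union>F') = {}"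
proof -
  have "\<Union>F \<in> K" "\<Union>F' \<in> K" using Union_flag_in_complex assms by blast+
  then show ?thesis
    using that subset_if_meets_rel_interior[of "\<Union>F" "\<Union>F'"] subset_if_meets_rel_interior[of "\<Union>F'" "\<Union>F"]
    by blast
qed

lemma convex_hull_flag_Int:
  assumes "flag F" "flag F'"
  shows "convex hull (c ` F) \<inter> convex hull (c ` F') = convex hull (c ` (F \<inter> F'))"
  using assms
proof (induction "card F + card F'" arbitrary: F F' rule: less_induct)
  case less
  have below: "flag (F - {\<Union>F})" "flag (F' - {\<Union>F'})"
    using flag_subset less.prems Diff_subset by blast+
  show ?case
  proof (cases "F = {} \<or> F' = {}")
    case False
    then have ne: "F \<noteq> {}" "F' \<noteq> {}" by auto
    from less.prems(1) ne(1) less.prems(2) ne(2) show ?thesis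
    proof (cases rule: flag_tops_cases)
      case 1
      let ?t = "\<Union>F"
      have "card (F - {?t}) + card (F' - {?t}) < card F + card F'"
        using card_flag_below_top_less[OF less.prems(1) ne(1)]
          card_flag_below_top_less[OF less.prems(2) ne(2)] 1
        by simp
      then have "convex hull (c ` (F - {?t})) \<inter> convex hull (c ` (F' - {?t})) =
                 convex hull (c ` ((F - {?t}) \<inter> (F' - {?t})))"
        using less.hyps[OF _ below(1) below(2)[unfolded 1]] by blast
      then have "convex hull (c ` F) \<inter> convex hull (c ` F') =
                 convex hull (c ` insert ?t ((F - {?t}) \<inter> (F' - {?t})))"
        using convex_hull_flag_Int_same_top[OF less.prems(1) ne(1) less.prems(2) ne(2) 1]
        by (metis hull_insert image_insert)
      also have "insert ?t ((F - {?t}) \<inter> (F' - {?t})) = F \<inter> F'"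
        using Union_in_flag[OF less.prems(1) ne(1)] Union_in_flag[OF less.prems(2) ne(2), unfolded 1]
        by blast
      finally show ?thesis .
    next
      case 2
      have "card (F - {\<Union>F}) + card F' < card F + card F'"
        using card_flag_below_top_less[OF less.prems(1) ne(1)] by linarith
      note ih = less.hyps[OF this below(1) less.prems(2)]
      show ?thesis
        using ih convex_hull_flag_Int_drop_top[OF less.prems(1) ne(1) less.prems(2) 2]
        by (simp add: Diff_Int_distrib2)
    next
      case 3
      have "card F + card (F' - {\<Union>F'}) < card F + card F'"
        using card_flag_below_top_less[OF less.prems(2) ne(2)] by linarith
      note ih = less.hyps[OF this less.prems(1) below(2)]
      show ?thesis
        using ih convex_hull_flag_Int_drop_top[OF less.prems(2) ne(2) less.prems(1) 3]
        by (simp add: Int_commute Diff_Int_distrib)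
    qed
  qed auto
qed

lemma finite_derived_complex: "finite (derived_complex c K)"
proof -
  have "{F. flag F} \<subseteq> Pow K" by (auto simp: flag_def)
  moreover have "finite K" using simplicial_complex by (simp add: simplicial_complex_def)
  ultimately have "finite {F. flag F}" by (simp add: finite_subset)
  then show ?thesis unfolding derived_complex_eq by (simp add: setcompr_eq_image)
qed

lemma simplex_convex_hull_flag: "flag F \<Longrightarrow> \<exists>n. n simplex convex hull (c ` F)"
  unfolding simplex_def using affine_independent_centres
  by (intro exI[of _ "int (card (c ` F)) - 1"] exI[of _ "c ` F"]) simp

lemma face_of_convex_hull_flag:
  assumes "flag F" "Y face_of convex hull (c ` F)"
  obtains G where "flag G" "Y = convex hull (c ` G)"
proof -
  obtain C where C: "C \<subseteq> c ` F" "Y = convex hull C"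
    using assms(2)
    unfolding face_of_convex_hull_affine_independent[OF affine_independent_centres[OF assms(1)]]
    by blast
  define G where "G = {s \<in> F. c s \<in> C}"
  have "c ` G = C" unfolding G_def using C(1) by blast
  moreover have "flag G" by (rule flag_subset[OF assms(1)]) (simp add: G_def)
  ultimately show ?thesis using that[of G] C(2) by simp
qed

lemma Int_convex_hull_flag_face_of:
  assumes "flag F" "flag F'"
  shows "convex hull (c ` F) \<inter> convex hull (c ` F') face_of convex hull (c ` F)"
proof -
  have "convex hull (c ` (F \<inter> F')) face_of convex hull (c ` F)"
    unfolding face_of_convex_hull_affine_independent[OF affine_independent_centres[OF assms(1)]]
    by (intro exI[of _ "c ` (F \<inter> F')"]) auto
  then show ?thesis using convex_hull_flag_Int[OF assms] by simp
qed

lemma simplicial_complex_derived_complex: "simplicial_complex (derived_complex c K)"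
  unfolding simplicial_complex_def
proof (intro conjI allI impI ballI finite_derived_complex)
  fix S assume "S \<in> derived_complex c K"
  then show "\<exists>n. n simplex S" unfolding derived_complex_eq using simplex_convex_hull_flag by blast
next
  fix Y S assume "S \<in> derived_complex c K \<and> Y face_of S"
  then obtain F where "flag F" "Y face_of convex hull (c ` F)" unfolding derived_complex_eq by blast
  then obtain G where "flag G" "Y = convex hull (c ` G)" by (rule face_of_convex_hull_flag)
  then show "Y \<in> derived_complex c K" unfolding derived_complex_eq by blast
next
  fix S S' assume "S \<in> derived_complex c K \<and> S' \<in> derived_complex c K"
  then obtain F F' where "flag F" "S = convex hull (c ` F)" "flag F'" "S' = convex hull (c ` F')"
    unfolding derived_complex_eq by blast
  then show "S \<inter> S' face_of S" using Int_convex_hull_flag_face_of by blast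
qed

lemma obtain_flag_covering_point:
  assumes "s \<in> K" "p \<in> s"
  obtains F where "flag F" "\<Union>F \<subseteq> s" "p \<in> convex hull (c ` F)"
  using assms
proof (induction "nat (aff_dim s)" arbitrary: s p thesis rule: less_induct)
  case less
  have s: "s \<noteq> {}" "convex s" "compact s"
    using less.prems(2,3) convex_member simplicial_complex compact_simplex
    unfolding simplicial_complex_def by blast+
  have cs: "c s \<in> rel_interior s" using centre_rel_interior less.prems(2) s(1) by blast
  show ?case
  proof (cases "p = c s")
    case True
    have "flag {s}" using less.prems(2) s(1) by (simp add: flag_def chain_subset_def)
    then show ?thesis using less.prems(1) True by (simp add: hull_inc)
  next
    case False
    obtain y where y: "y \<in> rel_frontier s" "p \<in> closed_segment (c s) y"
      using segment_to_rel_frontier_aux[OF s(2) compact_imp_bounded[OF s(3)] cs less.prems(3)] False by metis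
    have "polyhedron s"
      using less.prems(2) simplicial_complex simplex_imp_polytope polytope_imp_polyhedron
      unfolding simplicial_complex_def by blast
    then obtain f where f: "f face_of s" "f \<noteq> s" "y \<in> f"
      using rel_frontier_of_polyhedron_alt y(1) by blast
    have "f \<in> K" using simplicial_complex less.prems(2) f(1) by (auto simp: simplicial_complex_def)
    have "aff_dim f < aff_dim s" "0 \<le> aff_dim f"
      using face_of_aff_dim_lt[OF s(2) f(1,2)] f(3) by (auto simp flip: not_less)
    then obtain H where H: "flag H" "\<Union>H \<subseteq> f" "y \<in> convex hull (c ` H)"
      using less.hyps[of f] \<open>f \<in> K\<close> f(3) by (metis nat_less_eq_zless)
    have "f \<subseteq> s" using f(1) face_of_imp_subset by blast
    then have flag: "flag (insert s H)" using flag_insert[OF H(1) less.prems(2) s(1)] H(2) by blast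
    have "y \<in> convex hull (c ` insert s H)" "c s \<in> convex hull (c ` insert s H)"
      using H(3) hull_mono[of "c ` H" "c ` insert s H"] hull_inc[of "c s" "c ` insert s H"] by auto
    then have "closed_segment (c s) y \<subseteq> convex hull (c ` insert s H)"
      by (simp add: closed_segment_subset)
    then show ?thesis
      using less.prems(1) flag H(2) \<open>f \<subseteq> s\<close> y(2) by blast
  qed
qed

lemma Union_derived_complex: "\<Union>(derived_complex c K) = \<Union>K"
proof
  show "\<Union>(derived_complex c K) \<subseteq> \<Union>K"
  proof
    fix x assume "x \<in> \<Union>(derived_complex c K)"
    then obtain F where F: "flag F" "x \<in> convex hull (c ` F)" unfolding derived_complex_eq by blast
    then have "F \<noteq> {}" by auto
    then show "x \<in> \<Union>K"
      using convex_hull_flag_subset_Union[OF F(1)] F(2) Union_flag_in_complex[OF F(1)] by blast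
  qed
  show "\<Union>K \<subseteq> \<Union>(derived_complex c K)"
  proof
    fix x assume "x \<in> \<Union>K"
    then obtain s where "s \<in> K" "x \<in> s" by blast
    then obtain F where "flag F" "x \<in> convex hull (c ` F)" using obtain_flag_covering_point by metis
    then show "x \<in> \<Union>(derived_complex c K)" unfolding derived_complex_eq by blast
  qed
qed

lemma derived_subdivision_derived_complex: "derived_subdivision K (derived_complex c K)"
proof -
  have "derived_complex c K = {convex hull (c ` F) | F. F \<subseteq> K - {{}} \<and> (\<forall>A\<in>F. \<forall>B\<in>F. A \<subseteq> B \<or> B \<subseteq> A)}"
    by (simp add: derived_complex_def chain_subset_def)
  then show ?thesis
    unfolding derived_subdivision_def straight_triangulation_def
    using simplicial_complex_derived_complex Union_derived_complex centre_rel_interior by blast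
qed

lemma derived_complex_subset_member:
  assumes "\<sigma> \<in> derived_complex c K" "\<sigma> \<noteq> {}"
  obtains s where "s \<in> K" "\<sigma> \<subseteq> s"
proof -
  obtain F where F: "flag F" "\<sigma> = convex hull (c ` F)" using assms(1) unfolding derived_complex_eq by blast
  then have "F \<noteq> {}" using assms(2) by auto
  then show ?thesis
    using that[of "\<Union>F"] convex_hull_flag_subset_Union[OF F(1)] Union_flag_in_complex[OF F(1) \<open>F \<noteq> {}\<close>] F(2)
    by blast
qed

lemma rel_interior_convex_hull_flag_subset_open_join_below:
  assumes "flag F" "F - {\<Union>F} \<noteq> {}"
  shows "rel_interior (convex hull (c ` F)) \<subseteq> open_join (c (\<Union>F)) (convex hull (c ` (F - {\<Union>F})))"
proof -
  have ne: "F \<noteq> {}" using assms(2) by blast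
  have e: "c ` F = insert (c (\<Union>F)) (c ` (F - {\<Union>F}))"
    by (rule centres_insert_top[OF Union_in_flag[OF assms(1) ne]])
  have "\<not> affine_dependent (insert (c (\<Union>F)) (c ` (F - {\<Union>F})))"
    using affine_independent_centres[OF assms(1)] e by argo
  moreover have "c (\<Union>F) \<notin> c ` (F - {\<Union>F})"
    using centre_top_notin_affine_hull_below[OF assms(1) ne] hull_subset[of "c ` (F - {\<Union>F})" affine]
    by blast
  moreover have "c ` (F - {\<Union>F}) \<noteq> {}" using assms(2) by blast
  ultimately have "rel_interior (convex hull (insert (c (\<Union>F)) (c ` (F - {\<Union>F})))) \<subseteq>
                   open_join (c (\<Union>F)) (convex hull (c ` (F - {\<Union>F})))"
    by (rule rel_interior_convex_hull_insert_subset_open_join)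
  then show ?thesis using e by argo
qed

lemma rel_interior_convex_hull_flag_subset_top:
  assumes "flag F" "F \<noteq> {}"
  shows "rel_interior (convex hull (c ` F)) \<subseteq> rel_interior (\<Union>F)"
proof (cases "F - {\<Union>F} = {}")
  case True
  then have "F = {\<Union>F}" using Union_in_flag[OF assms] by blast
  then have "rel_interior (convex hull (c ` F)) = {c (\<Union>F)}"
    by (metis image_empty image_insert convex_hull_singleton rel_interior_sing)
  then show ?thesis using centre_rel_interior Union_flag_in_complex[OF assms] by simp
next
  case False
  have top: "\<Union>F \<in> K" "\<Union>F \<noteq> {}" using Union_flag_in_complex[OF assms] by auto
  have "open_join (c (\<Union>F)) (convex hull (c ` (F - {\<Union>F}))) \<subseteq> rel_interior (\<Union>F)"
    using convex_hull_flag_below_top_subset_rel_frontier[OF assms]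
    by (intro open_join_subset_rel_interior convex_member top centre_rel_interior)
      (auto simp: rel_frontier_def)
  then show ?thesis
    using rel_interior_convex_hull_flag_subset_open_join_below[OF assms(1) False] by blast
qed

lemma rel_interior_convex_hull_flag_subset_open_join:
  assumes "flag F" "F - {\<Union>F} \<noteq> {}"
  shows "rel_interior (convex hull (c ` F)) \<subseteq> open_join (c (\<Union>F)) (\<Union>(F - {\<Union>F}))"
proof -
  have "open_join (c (\<Union>F)) (convex hull (c ` (F - {\<Union>F}))) \<subseteq> open_join (c (\<Union>F)) (\<Union>(F - {\<Union>F}))"
    using rel_interior_convex_hull_flag_subset_top[OF flag_subset[OF assms(1) Diff_subset] assms(2)]
    by (rule open_join_mono)
  then show ?thesis
    using rel_interior_convex_hull_flag_subset_open_join_below[OF assms] by blast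
qed

end

section \<open>Halving centres of simplices of dimension at most two\<close>

lemma obtain_median:
  fixes g :: "'b \<Rightarrow> 'c::linorder"
  assumes "finite A" "A \<noteq> {}"
  obtains a0 where "a0 \<in> A" "2 * card {a\<in>A. g a < g a0} \<le> card A" "2 * card {a\<in>A. g a0 < g a} \<le> card A"
proof -
  define B where "B = {a\<in>A. 2 * card {b\<in>A. g b < g a} \<le> card A}"
  define m where "m = arg_min_on g A"
  have m: "m \<in> A" "\<And>b. b \<in> A \<Longrightarrow> g m \<le> g b"
    unfolding m_def by (rule arg_min_if_finite(1)[OF assms], rule arg_min_least[OF assms])
  then have "{b\<in>A. g b < g m} = {}" using leD by blast
  then have "card {b\<in>A. g b < g m} = 0" by (simp only: card.empty)
  then have "m \<in> B" unfolding B_def using m(1) by simp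
  moreover have "finite B" using assms(1) by (simp add: B_def)
  ultimately have "Max (g ` B) \<in> g ` B" by (intro Max_in) auto
  then obtain a0 where "Max (g ` B) = g a0" "a0 \<in> B" by (rule imageE)
  moreover have "g a \<le> Max (g ` B)" if "a \<in> B" for a using \<open>finite B\<close> that by simp
  ultimately have a0: "a0 \<in> B" "\<And>a. a \<in> B \<Longrightarrow> g a \<le> g a0" by auto
  have "2 * card {a\<in>A. g a0 < g a} \<le> card A"
  proof (rule ccontr)
    define U where "U = {a\<in>A. g a0 < g a}"
    assume "\<not> 2 * card {a\<in>A. g a0 < g a} \<le> card A"
    then have big: "card A < 2 * card U" by (simp add: U_def)
    then have "U \<noteq> {}" by (metis card.empty less_nat_zero_code mult_0_right)
    have "finite U" using assms(1) by (simp add: U_def)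
    define a1 where "a1 = arg_min_on g U"
    have a1: "a1 \<in> U" "\<And>b. b \<in> U \<Longrightarrow> g a1 \<le> g b"
      unfolding a1_def by (rule arg_min_if_finite(1)[OF \<open>finite U\<close> \<open>U \<noteq> {}\<close>],
          rule arg_min_least[OF \<open>finite U\<close> \<open>U \<noteq> {}\<close>])
    have "g b < g a1 \<longleftrightarrow> b \<notin> U" if "b \<in> A" for b
      using that a1 leD less_le_trans unfolding U_def by (metis (mono_tags, lifting) mem_Collect_eq not_less)
    then have "{b\<in>A. g b < g a1} = A - U" by blast
    then have "card {b\<in>A. g b < g a1} = card A - card U"
      using assms(1) by (simp add: card_Diff_subset U_def)
    then have "a1 \<in> B" using a1(1) big by (simp add: B_def U_def)
    then have "g a1 \<le> g a0" by (rule a0(2))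
    moreover have "g a0 < g a1" using a1(1) by (simp add: U_def)
    ultimately show False by (blast dest: leD)
  qed
  then show ?thesis using that a0(1) unfolding B_def by blast
qed

lemma double_card_le_if_subset:
  assumes "finite B" "A \<subseteq> B" "2 * card B \<le> n"
  shows "2 * card A \<le> n"
  using card_mono[OF assms(1,2)] assms(3) by linarith

lemma segment_halving_point:
  fixes v1 v2 :: "'a::euclidean_space"
  assumes "v1 \<noteq> v2" "finite A" "A \<noteq> {}" "A \<subseteq> rel_interior (convex hull {v1, v2})"
  obtains z where "z \<in> rel_interior (convex hull {v1, v2})"
    "\<And>C. C \<subseteq> {v1, v2} \<Longrightarrow> C \<noteq> {} \<Longrightarrow> C \<noteq> {v1, v2} \<Longrightarrow>
      2 * card (A \<inter> open_join z (convex hull C)) \<le> card A"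
proof -
  define d where "d = v2 - v1"
  define L where "L p = ((p - v1) \<bullet> d) / (d \<bullet> d)" for p
  have L: "L (v1 + s *\<^sub>R d) = s" for s using assms(1) by (simp add: L_def d_def)
  have seg: "rel_interior (convex hull {v1, v2}) = {v1 + s *\<^sub>R d | s. 0 < s \<and> s < 1}"
    using assms(1) by (auto simp: segment_convex_hull[symmetric] rel_interior_closed_segment in_segment
        d_def algebra_simps)
  obtain a0 where a0: "a0 \<in> A" "2 * card {a\<in>A. L a < L a0} \<le> card A" "2 * card {a\<in>A. L a0 < L a} \<le> card A"
    using obtain_median[OF assms(2,3)] by blast
  define \<theta> where "\<theta> = L a0"
  have \<theta>: "0 < \<theta>" "\<theta> < 1" using a0(1) assms(4) L by (auto simp: seg \<theta>_def)
  define z where "z = v1 + \<theta> *\<^sub>R d"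
  have sub1: "A \<inter> open_join z {v1} \<subseteq> {a\<in>A. L a < L a0}"
  proof (clarsimp simp: open_join_singleton)
    fix u :: real assume "0 < u" "u < 1"
    moreover have "u *\<^sub>R z + (1 - u) *\<^sub>R v1 = v1 + (u * \<theta>) *\<^sub>R d" by (simp add: z_def algebra_simps)
    ultimately show "L (u *\<^sub>R z + (1 - u) *\<^sub>R v1) < L a0" using \<theta> by (simp add: L \<theta>_def[symmetric])
  qed
  have sub2: "A \<inter> open_join z {v2} \<subseteq> {a\<in>A. L a0 < L a}"
  proof (clarsimp simp: open_join_singleton)
    fix u :: real assume u: "0 < u" "u < 1"
    have "u *\<^sub>R z + (1 - u) *\<^sub>R v2 = v1 + (1 - u * (1 - \<theta>)) *\<^sub>R d" by (simp add: z_def d_def algebra_simps)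
    moreover have "u * (1 - \<theta>) < 1 - \<theta>" using u \<theta> by simp
    ultimately show "L a0 < L (u *\<^sub>R z + (1 - u) *\<^sub>R v2)" by (simp add: L \<theta>_def[symmetric])
  qed
  have "2 * card (A \<inter> open_join z {v}) \<le> card A" if "v \<in> {v1, v2}" for v
    using that double_card_le_if_subset[OF _ sub1 a0(2)] double_card_le_if_subset[OF _ sub2 a0(3)] assms(2)
    by auto
  moreover have "C = {v1} \<or> C = {v2}" if "C \<subseteq> {v1, v2}" "C \<noteq> {}" "C \<noteq> {v1, v2}" for C
    using that by blast
  moreover have "z \<in> rel_interior (convex hull {v1, v2})" using \<theta> by (auto simp: seg z_def)
  ultimately show ?thesis using that by (metis convex_hull_singleton insertCI)
qed

lemma triangle_coordinates_unique:
  fixes v1 v2 v3 :: "'a::euclidean_space"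
  assumes indep: "\<not> affine_dependent {v1, v2, v3}" and d: "v1 \<noteq> v2" "v1 \<noteq> v3" "v2 \<noteq> v3"
    and eq: "v1 + a *\<^sub>R (v2 - v1) + b *\<^sub>R (v3 - v1) = v1 + a' *\<^sub>R (v2 - v1) + b' *\<^sub>R (v3 - v1)"
  shows "a = a'" "b = b'"
proof -
  define U where "U v = (if v = v1 then (a' - a) + (b' - b) else if v = v2 then a - a' else b - b')" for v
  have "sum U {v1, v2, v3} = 0" using d by (simp add: U_def)
  moreover have "(\<Sum>v\<in>{v1, v2, v3}. U v *\<^sub>R v) = 0"
    using d eq by (simp add: U_def algebra_simps)
  ultimately have "\<forall>v\<in>{v1, v2, v3}. U v = 0"
    using indep affine_dependent_explicit_finite[of "{v1, v2, v3}"] by auto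
  then show "a = a'" "b = b'" using d by (auto simp: U_def)
qed

lemma obtain_triangle_coordinates:
  fixes v1 v2 v3 :: "'a::euclidean_space"
  assumes "\<not> affine_dependent {v1, v2, v3}" "v1 \<noteq> v2" "v1 \<noteq> v3" "v2 \<noteq> v3"
  obtains X Y :: "'a \<Rightarrow> real"
  where "\<And>a b. X (v1 + a *\<^sub>R (v2 - v1) + b *\<^sub>R (v3 - v1)) = a"
    and "\<And>a b. Y (v1 + a *\<^sub>R (v2 - v1) + b *\<^sub>R (v3 - v1)) = b"
proof
  let ?pt = "\<lambda>a b. v1 + a *\<^sub>R (v2 - v1) + b *\<^sub>R (v3 - v1)"
  show "(THE a'. \<exists>b'. ?pt a b = ?pt a' b') = a" for a b
    by (rule the_equality) (blast, use triangle_coordinates_unique[OF assms] in blast)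
  show "(THE b'. \<exists>a'. ?pt a b = ?pt a' b') = b" for a b
    by (rule the_equality) (blast, use triangle_coordinates_unique[OF assms] in blast)
qed

lemma rel_interior_triangle_face_coordinates:
  fixes v1 v2 v3 :: "'a::euclidean_space"
  assumes indep: "\<not> affine_dependent {v1, v2, v3}" and d: "v1 \<noteq> v2" "v1 \<noteq> v3" "v2 \<noteq> v3"
    and C: "C \<subseteq> {v1, v2, v3}" and y: "y \<in> rel_interior (convex hull C)"
  obtains a b where "y = v1 + a *\<^sub>R (v2 - v1) + b *\<^sub>R (v3 - v1)" "0 \<le> a" "0 \<le> b" "a + b \<le> 1"
    "0 < a \<longleftrightarrow> v2 \<in> C" "0 < b \<longleftrightarrow> v3 \<in> C" "a + b < 1 \<longleftrightarrow> v1 \<in> C"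
proof -
  obtain w where w: "\<forall>v\<in>C. 0 < w v" "sum w C = 1" "(\<Sum>v\<in>C. w v *\<^sub>R v) = y"
    using y rel_interior_convex_hull_explicit[OF affine_independent_subset[OF indep C]] by blast
  define w' where "w' v = (if v \<in> C then w v else 0)" for v
  have "{v1, v2, v3} \<inter> C = C" using C by blast
  then have "sum w' {v1, v2, v3} = sum w C" "(\<Sum>v\<in>{v1, v2, v3}. w' v *\<^sub>R v) = (\<Sum>v\<in>C. w v *\<^sub>R v)"
    using sum.inter_restrict[of "{v1, v2, v3}" w C] sum.inter_restrict[of "{v1, v2, v3}" "\<lambda>v. w v *\<^sub>R v" C]
    by (simp_all add: w'_def if_distrib[of "\<lambda>r. r *\<^sub>R _"] cong: if_cong)
  then have "w' v1 + w' v2 + w' v3 = 1" and y_sum: "w' v1 *\<^sub>R v1 + w' v2 *\<^sub>R v2 + w' v3 *\<^sub>R v3 = y"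
    using w(2,3) d by (simp_all add: add.assoc)
  then have w1: "w' v1 = 1 - (w' v2 + w' v3)" by linarith
  have "y = v1 + w' v2 *\<^sub>R (v2 - v1) + w' v3 *\<^sub>R (v3 - v1)"
    using y_sum unfolding w1 by (simp add: algebra_simps)
  moreover have nonneg: "0 \<le> w' v" and pos: "0 < w' v \<longleftrightarrow> v \<in> C" for v
    using w(1) by (auto simp: w'_def less_le)
  moreover have "w' v2 + w' v3 \<le> 1" "w' v2 + w' v3 < 1 \<longleftrightarrow> v1 \<in> C"
    using nonneg[of v1] pos[of v1] unfolding w1 by auto
  ultimately show ?thesis using that by blast
qed

lemma triangle_coordinates_mem_rel_interior:
  fixes v1 v2 v3 :: "'a::euclidean_space"
  assumes indep: "\<not> affine_dependent {v1, v2, v3}" and d: "v1 \<noteq> v2" "v1 \<noteq> v3" "v2 \<noteq> v3"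
    and "0 < a" "0 < b" "a + b < 1"
  shows "v1 + a *\<^sub>R (v2 - v1) + b *\<^sub>R (v3 - v1) \<in> rel_interior (convex hull {v1, v2, v3})"
  unfolding rel_interior_convex_hull_explicit[OF indep]
proof (intro CollectI exI[of _ "\<lambda>v. if v = v1 then 1 - a - b else if v = v2 then a else b"] conjI)
  show "\<forall>v\<in>{v1, v2, v3}. 0 < (if v = v1 then 1 - a - b else if v = v2 then a else b)"
    using assms(5-7) by auto
  show "(\<Sum>v\<in>{v1, v2, v3}. if v = v1 then 1 - a - b else if v = v2 then a else b) = 1"
    using d by simp
  show "(\<Sum>v\<in>{v1, v2, v3}. (if v = v1 then 1 - a - b else if v = v2 then a else b) *\<^sub>R v) =
        v1 + a *\<^sub>R (v2 - v1) + b *\<^sub>R (v3 - v1)"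
    using d by (simp add: algebra_simps)
qed

lemma open_join_triangle_face_coordinates:
  fixes v1 v2 v3 :: "'a::euclidean_space"
  assumes indep: "\<not> affine_dependent {v1, v2, v3}" and d: "v1 \<noteq> v2" "v1 \<noteq> v3" "v2 \<noteq> v3"
    and C: "C \<subseteq> {v1, v2, v3}"
    and p: "p \<in> open_join (v1 + x *\<^sub>R (v2 - v1) + y *\<^sub>R (v3 - v1)) (convex hull C)"
  obtains u a b where "0 < u" "u < 1" "0 \<le> a" "0 \<le> b" "a + b \<le> 1"
    "0 < a \<longleftrightarrow> v2 \<in> C" "0 < b \<longleftrightarrow> v3 \<in> C" "a + b < 1 \<longleftrightarrow> v1 \<in> C"
    "p = v1 + (u * x + (1 - u) * a) *\<^sub>R (v2 - v1) + (u * y + (1 - u) * b) *\<^sub>R (v3 - v1)"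
proof -
  obtain u q where u: "0 < u" "u < 1" and q: "q \<in> rel_interior (convex hull C)"
    and pq: "p = u *\<^sub>R (v1 + x *\<^sub>R (v2 - v1) + y *\<^sub>R (v3 - v1)) + (1 - u) *\<^sub>R q"
    using p unfolding open_join_def by blast
  obtain a b where ab: "q = v1 + a *\<^sub>R (v2 - v1) + b *\<^sub>R (v3 - v1)" "0 \<le> a" "0 \<le> b" "a + b \<le> 1"
    "0 < a \<longleftrightarrow> v2 \<in> C" "0 < b \<longleftrightarrow> v3 \<in> C" "a + b < 1 \<longleftrightarrow> v1 \<in> C"
    using rel_interior_triangle_face_coordinates[OF indep d C q] by blast
  have "p = v1 + (u * x + (1 - u) * a) *\<^sub>R (v2 - v1) + (u * y + (1 - u) * b) *\<^sub>R (v3 - v1)"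
    unfolding pq ab(1) by (simp add: algebra_simps)
  then show ?thesis using that u ab(2-7) by blast
qed

(* In affine coordinates with respect to v1 (so v2 = (1, 0) and v3 = (0, 1)), the cevian from v1
   through (x, y) has direction y / (x + y), and (x, y) lies in the triangle with vertices v2, v3 and
   t (1 - \<rho>, \<rho>) iff t \<le> cevian_depth \<rho> x y. *)
definition cevian_depth :: "real \<Rightarrow> real \<Rightarrow> real \<Rightarrow> real" where
  "cevian_depth \<rho> x y = min (x / (x + (1 - \<rho>) * (1 - x - y))) (y / (y + \<rho> * (1 - x - y)))"

lemma less_divide_add_if:
  fixes t k x :: real
  assumes "0 < t" "t < 1" "0 < k" "t * k < x"
  shows "t < x / (x + (1 - t) * k)"
proof -
  have "0 < x" using assms by (smt (verit) mult_pos_pos)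
  moreover have "t * (x + (1 - t) * k) < x"
    using assms mult_strict_left_mono[OF assms(4), of "1 - t"] by (simp add: algebra_simps)
  ultimately show ?thesis
    using assms by (simp add: less_divide_eq add_pos_pos)
qed

lemma cevian_cone_bounds:
  fixes t \<rho> u a b :: real
  assumes t: "0 < t" "t < 1" and \<rho>: "0 < \<rho>" "\<rho> < 1" and u: "0 < u" "u < 1" and "0 \<le> a" "0 \<le> b"
  defines "x \<equiv> u * (t * (1 - \<rho>)) + (1 - u) * a" and "y \<equiv> u * (t * \<rho>) + (1 - u) * b"
  shows "b = 0 \<Longrightarrow> 0 < a \<Longrightarrow> y / (x + y) < \<rho>"
    and "a = 0 \<Longrightarrow> 0 < b \<Longrightarrow> \<rho> < y / (x + y)"
    and "a = 0 \<Longrightarrow> b = 0 \<Longrightarrow> cevian_depth \<rho> x y < t"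
    and "a + b = 1 \<Longrightarrow> 0 < a \<Longrightarrow> 0 < b \<Longrightarrow> t < cevian_depth \<rho> x y"
proof -
  have "0 < x + y" unfolding x_def y_def using assms
    by (smt (verit, best) mult_nonneg_nonneg mult_pos_pos)
  show "b = 0 \<Longrightarrow> 0 < a \<Longrightarrow> y / (x + y) < \<rho>"
  proof -
    assume "b = 0" "0 < a"
    then have "\<rho> * (x + y) = y + \<rho> * ((1 - u) * a)" unfolding x_def y_def by (simp add: algebra_simps)
    moreover have "0 < \<rho> * ((1 - u) * a)" using \<open>0 < a\<close> \<rho> u by simp
    ultimately show ?thesis using \<open>0 < x + y\<close> by (simp add: divide_less_eq)
  qed
  show "a = 0 \<Longrightarrow> 0 < b \<Longrightarrow> \<rho> < y / (x + y)"
  proof -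
    assume "a = 0" "0 < b"
    then have "\<rho> * (x + y) = y - (1 - \<rho>) * ((1 - u) * b)" unfolding x_def y_def by (simp add: algebra_simps)
    moreover have "0 < (1 - \<rho>) * ((1 - u) * b)" using \<open>0 < b\<close> \<rho> u by simp
    ultimately show ?thesis using \<open>0 < x + y\<close> by (simp add: less_divide_eq)
  qed
  show "a = 0 \<Longrightarrow> b = 0 \<Longrightarrow> cevian_depth \<rho> x y < t"
  proof -
    assume "a = 0" "b = 0"
    then have "x + (1 - \<rho>) * (1 - x - y) = 1 - \<rho>" "x = (1 - \<rho>) * (u * t)"
      unfolding x_def y_def by (simp_all add: algebra_simps)
    then have "x / (x + (1 - \<rho>) * (1 - x - y)) = u * t" using \<rho> by simp
    moreover have "u * t < t" using t u by simp
    ultimately show ?thesis by (simp add: cevian_depth_def min_less_iff_disj)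
  qed
  show "a + b = 1 \<Longrightarrow> 0 < a \<Longrightarrow> 0 < b \<Longrightarrow> t < cevian_depth \<rho> x y"
  proof -
    assume ab: "a + b = 1" "0 < a" "0 < b"
    then have b: "b = 1 - a" by simp
    have e: "1 - x - y = (1 - t) * u" unfolding x_def y_def b by (simp add: algebra_simps)
    have "t * (u * (1 - \<rho>)) < x" "t * (u * \<rho>) < y"
      unfolding x_def y_def using ab u by (simp_all add: algebra_simps)
    then have "t < x / (x + (1 - t) * (u * (1 - \<rho>)))" "t < y / (y + (1 - t) * (u * \<rho>))"
      using less_divide_add_if t u \<rho> by simp_all
    then show ?thesis unfolding cevian_depth_def e by (simp add: algebra_simps)
  qed
qed

lemma obtain_cevian_parameters:
  fixes X Y :: "'b \<Rightarrow> real"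
  assumes "finite A" "A \<noteq> {}" and XY: "\<And>p. p \<in> A \<Longrightarrow> 0 < X p \<and> 0 < Y p \<and> X p + Y p < 1"
  obtains \<rho> t where "0 < \<rho>" "\<rho> < 1" "0 < t" "t < 1"
    "2 * card {p\<in>A. Y p / (X p + Y p) < \<rho>} \<le> card A" "2 * card {p\<in>A. \<rho> < Y p / (X p + Y p)} \<le> card A"
    "2 * card {p\<in>A. cevian_depth \<rho> (X p) (Y p) < t} \<le> card A"
    "2 * card {p\<in>A. t < cevian_depth \<rho> (X p) (Y p)} \<le> card A"
proof -
  obtain a0 where a0: "a0 \<in> A" "2 * card {p\<in>A. Y p / (X p + Y p) < Y a0 / (X a0 + Y a0)} \<le> card A"
      "2 * card {p\<in>A. Y a0 / (X a0 + Y a0) < Y p / (X p + Y p)} \<le> card A"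
    by (rule obtain_median[OF assms(1,2)])
  define \<rho> where "\<rho> = Y a0 / (X a0 + Y a0)"
  have \<rho>: "0 < \<rho>" "\<rho> < 1" using XY[OF a0(1)] by (simp_all add: \<rho>_def)
  obtain a1 where a1: "a1 \<in> A"
      "2 * card {p\<in>A. cevian_depth \<rho> (X p) (Y p) < cevian_depth \<rho> (X a1) (Y a1)} \<le> card A"
      "2 * card {p\<in>A. cevian_depth \<rho> (X a1) (Y a1) < cevian_depth \<rho> (X p) (Y p)} \<le> card A"
    by (rule obtain_median[OF assms(1,2)])
  have "0 < (1 - \<rho>) * (1 - X a1 - Y a1)" "0 < \<rho> * (1 - X a1 - Y a1)" using XY[OF a1(1)] \<rho> by simp_all
  then have "0 < cevian_depth \<rho> (X a1) (Y a1)" "cevian_depth \<rho> (X a1) (Y a1) < 1"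
    using XY[OF a1(1)] by (simp_all add: cevian_depth_def min_less_iff_disj divide_less_eq add_pos_pos)
  then show ?thesis using that \<rho> a0(2,3) a1(2,3) unfolding \<rho>_def by blast
qed

lemma open_join_cevian_point_bounds:
  fixes v1 v2 v3 :: "'a::euclidean_space"
  assumes indep: "\<not> affine_dependent {v1, v2, v3}" and d: "v1 \<noteq> v2" "v1 \<noteq> v3" "v2 \<noteq> v3"
    and X: "\<And>a b. X (v1 + a *\<^sub>R (v2 - v1) + b *\<^sub>R (v3 - v1)) = a"
    and Y: "\<And>a b. Y (v1 + a *\<^sub>R (v2 - v1) + b *\<^sub>R (v3 - v1)) = b"
    and t: "0 < t" "t < 1" and \<rho>: "0 < \<rho>" "\<rho> < 1" and C: "C \<subseteq> {v1, v2, v3}"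
    and p: "p \<in> open_join (v1 + (t * (1 - \<rho>)) *\<^sub>R (v2 - v1) + (t * \<rho>) *\<^sub>R (v3 - v1)) (convex hull C)"
  shows "v2 \<in> C \<Longrightarrow> v3 \<notin> C \<Longrightarrow> Y p / (X p + Y p) < \<rho>"
    and "v3 \<in> C \<Longrightarrow> v2 \<notin> C \<Longrightarrow> \<rho> < Y p / (X p + Y p)"
    and "v2 \<notin> C \<Longrightarrow> v3 \<notin> C \<Longrightarrow> cevian_depth \<rho> (X p) (Y p) < t"
    and "v2 \<in> C \<Longrightarrow> v3 \<in> C \<Longrightarrow> v1 \<notin> C \<Longrightarrow> t < cevian_depth \<rho> (X p) (Y p)"
proof -
  obtain u a b where u: "0 < u" "u < 1" and ab: "0 \<le> a" "0 \<le> b" "a + b \<le> 1"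
    "0 < a \<longleftrightarrow> v2 \<in> C" "0 < b \<longleftrightarrow> v3 \<in> C" "a + b < 1 \<longleftrightarrow> v1 \<in> C"
    and "p = v1 + (u * (t * (1 - \<rho>)) + (1 - u) * a) *\<^sub>R (v2 - v1)
              + (u * (t * \<rho>) + (1 - u) * b) *\<^sub>R (v3 - v1)"
    using open_join_triangle_face_coordinates[OF indep d C p] by blast
  then have XY: "X p = u * (t * (1 - \<rho>)) + (1 - u) * a" "Y p = u * (t * \<rho>) + (1 - u) * b"
    using X Y by simp_all
  note bounds = cevian_cone_bounds[OF t \<rho> u ab(1,2), folded XY]
  show "v2 \<in> C \<Longrightarrow> v3 \<notin> C \<Longrightarrow> Y p / (X p + Y p) < \<rho>"
    using bounds(1) ab by simp
  show "v3 \<in> C \<Longrightarrow> v2 \<notin> C \<Longrightarrow> \<rho> < Y p / (X p + Y p)"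
    using bounds(2) ab by simp
  show "v2 \<notin> C \<Longrightarrow> v3 \<notin> C \<Longrightarrow> cevian_depth \<rho> (X p) (Y p) < t"
    using bounds(3) ab by simp
  show "v2 \<in> C \<Longrightarrow> v3 \<in> C \<Longrightarrow> v1 \<notin> C \<Longrightarrow> t < cevian_depth \<rho> (X p) (Y p)"
    using bounds(4) ab by simp
qed

lemma triangle_halving_point:
  fixes v1 v2 v3 :: "'a::euclidean_space"
  assumes indep: "\<not> affine_dependent {v1, v2, v3}" and d: "v1 \<noteq> v2" "v1 \<noteq> v3" "v2 \<noteq> v3"
    and A: "finite A" "A \<noteq> {}" "A \<subseteq> rel_interior (convex hull {v1, v2, v3})"
  obtains z where "z \<in> rel_interior (convex hull {v1, v2, v3})"
    "\<And>C. C \<subseteq> {v1, v2, v3} \<Longrightarrow> C \<noteq> {} \<Longrightarrow> C \<noteq> {v1, v2, v3} \<Longrightarrow>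
      2 * card (A \<inter> open_join z (convex hull C)) \<le> card A"
proof -
  obtain X Y where X: "\<And>a b. X (v1 + a *\<^sub>R (v2 - v1) + b *\<^sub>R (v3 - v1)) = a"
    and Y: "\<And>a b. Y (v1 + a *\<^sub>R (v2 - v1) + b *\<^sub>R (v3 - v1)) = b"
    using obtain_triangle_coordinates[OF indep d] by blast
  have "0 < X p \<and> 0 < Y p \<and> X p + Y p < 1" if "p \<in> A" for p
    using rel_interior_triangle_face_coordinates[OF indep d subset_refl, of p] A(3) that X Y
    by (metis insertCI subsetD)
  then obtain \<rho> t where \<rho>: "0 < \<rho>" "\<rho> < 1" and t: "0 < t" "t < 1"
    and halves: "2 * card {p\<in>A. Y p / (X p + Y p) < \<rho>} \<le> card A"
      "2 * card {p\<in>A. \<rho> < Y p / (X p + Y p)} \<le> card A"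
      "2 * card {p\<in>A. cevian_depth \<rho> (X p) (Y p) < t} \<le> card A"
      "2 * card {p\<in>A. t < cevian_depth \<rho> (X p) (Y p)} \<le> card A"
    using obtain_cevian_parameters[OF A(1,2)] by blast
  define z where "z = v1 + (t * (1 - \<rho>)) *\<^sub>R (v2 - v1) + (t * \<rho>) *\<^sub>R (v3 - v1)"
  have "z \<in> rel_interior (convex hull {v1, v2, v3})"
    unfolding z_def using \<rho> t
    by (intro triangle_coordinates_mem_rel_interior[OF indep d]) (auto simp: algebra_simps)
  moreover have "2 * card (A \<inter> open_join z (convex hull C)) \<le> card A"
    if C: "C \<subseteq> {v1, v2, v3}" "C \<noteq> {}" "C \<noteq> {v1, v2, v3}" for C
  proof -
    note bounds = open_join_cevian_point_bounds[OF indep d X Y t \<rho> C(1), folded z_def]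
    consider "v2 \<in> C" "v3 \<notin> C" | "v3 \<in> C" "v2 \<notin> C" | "v2 \<notin> C" "v3 \<notin> C" | "v2 \<in> C" "v3 \<in> C" "v1 \<notin> C"
      using C by blast
    then obtain H where "finite H" "2 * card H \<le> card A" "A \<inter> open_join z (convex hull C) \<subseteq> H"
    proof cases
      case 1 show ?thesis by (rule that[OF _ halves(1)]) (use A(1) bounds(1) 1 in auto)
    next
      case 2 show ?thesis by (rule that[OF _ halves(2)]) (use A(1) bounds(2) 2 in auto)
    next
      case 3 show ?thesis by (rule that[OF _ halves(3)]) (use A(1) bounds(3) 3 in auto)
    next
      case 4 show ?thesis by (rule that[OF _ halves(4)]) (use A(1) bounds(4) 4 in auto)
    qed
    then show ?thesis using double_card_le_if_subset by blast
  qed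
  ultimately show ?thesis using that by blast
qed

lemma affine_independent_halving_point:
  fixes V :: "'a::euclidean_space set"
  assumes V: "\<not> affine_dependent V" "V \<noteq> {}" "card V \<le> 3"
    and A: "finite A" "A \<subseteq> rel_interior (convex hull V)"
  shows "\<exists>z\<in>rel_interior (convex hull V). \<forall>C. C \<subseteq> V \<longrightarrow> C \<noteq> {} \<longrightarrow> C \<noteq> V \<longrightarrow>
           2 * card (A \<inter> open_join z (convex hull C)) \<le> card A"
proof -
  have "0 < card V" using V(1,2) aff_independent_finite by (simp add: card_gt_0_iff)
  then have card: "card V = 1 \<or> card V = 2 \<or> card V = 3" using V(3) by arith
  have ri: "rel_interior (convex hull V) \<noteq> {}" using V(2) by (simp add: rel_interior_eq_empty)
  show ?thesis
  proof (cases "A = {} \<or> card V = 1")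
    case True
    have "2 * card (A \<inter> open_join z (convex hull C)) \<le> card A"
      if "C \<subseteq> V" "C \<noteq> {}" "C \<noteq> V" for z C
    proof (cases "A = {}")
      case False
      then have "card V = 1" using True by blast
      then obtain v where "V = {v}" by (auto simp: card_1_singleton_iff)
      then show ?thesis using that by (auto simp: subset_singleton_iff)
    qed simp
    then show ?thesis using ri by blast
  next
    case False
    then consider "card V = 2" | "card V = 3" using card by linarith
    then show ?thesis
    proof cases
      case 1
      then obtain v1 v2 where v: "V = {v1, v2}" "v1 \<noteq> v2" by (auto simp: card_2_iff)
      obtain z where "z \<in> rel_interior (convex hull {v1, v2})"
        "\<And>C. C \<subseteq> {v1, v2} \<Longrightarrow> C \<noteq> {} \<Longrightarrow> C \<noteq> {v1, v2} \<Longrightarrow>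
          2 * card (A \<inter> open_join z (convex hull C)) \<le> card A"
        using segment_halving_point[OF v(2) A(1)] False A(2)[unfolded v(1)] by blast
      then show ?thesis unfolding v(1) by blast
    next
      case 2
      then obtain v1 v2 v3 where v: "V = {v1, v2, v3}" "v1 \<noteq> v2" "v1 \<noteq> v3" "v2 \<noteq> v3"
        by (auto simp: card_3_iff)
      obtain z where "z \<in> rel_interior (convex hull {v1, v2, v3})"
        "\<And>C. C \<subseteq> {v1, v2, v3} \<Longrightarrow> C \<noteq> {} \<Longrightarrow> C \<noteq> {v1, v2, v3} \<Longrightarrow>
          2 * card (A \<inter> open_join z (convex hull C)) \<le> card A"
        using triangle_halving_point[OF V(1)[unfolded v(1)] v(2-4) A(1)] False A(2)[unfolded v(1)] by blast
      then show ?thesis unfolding v(1) by blast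
    qed
  qed
qed

definition halving_centre :: "'a::euclidean_space set \<Rightarrow> 'a set \<Rightarrow> 'a \<Rightarrow> bool" where
  "halving_centre Q s z \<longleftrightarrow> z \<in> rel_interior s \<and>
     (\<forall>f. f face_of s \<longrightarrow> f \<noteq> {} \<longrightarrow> f \<noteq> s \<longrightarrow>
        2 * card (Q \<inter> rel_interior s \<inter> open_join z f) \<le> card (Q \<inter> rel_interior s))"

lemma exists_halving_centre:
  fixes s :: "'a::euclidean_space set"
  assumes "n simplex s" "aff_dim s \<le> 2" "s \<noteq> {}" "finite Q"
  shows "\<exists>z. halving_centre Q s z"
proof -
  obtain V where V: "\<not> affine_dependent V" "int (card V) = n + 1" "s = convex hull V"
    using assms(1) by (auto simp: simplex_def)
  have "V \<noteq> {}" "card V \<le> 3"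
    using V assms(2,3) aff_dim_simplex[OF assms(1)] by auto
  then obtain z where z: "z \<in> rel_interior s" and half: "\<And>C. C \<subseteq> V \<Longrightarrow> C \<noteq> {} \<Longrightarrow> C \<noteq> V \<Longrightarrow>
      2 * card (Q \<inter> rel_interior s \<inter> open_join z (convex hull C)) \<le> card (Q \<inter> rel_interior s)"
    using affine_independent_halving_point[OF V(1), of "Q \<inter> rel_interior s"] V(3) assms(4) by auto
  have "2 * card (Q \<inter> rel_interior s \<inter> open_join z f) \<le> card (Q \<inter> rel_interior s)"
    if "f face_of s" "f \<noteq> {}" "f \<noteq> s" for f
  proof -
    have "f face_of convex hull V" using that(1) V(3) by simp
    then obtain C where "C \<subseteq> V" "f = convex hull C"
      unfolding face_of_convex_hull_affine_independent[OF V(1)] by blast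
    then show ?thesis using half[of C] that(2,3) V(3) by auto
  qed
  then show ?thesis using z unfolding halving_centre_def by blast
qed

lemma obtain_halving_centres:
  fixes K :: "'a::euclidean_space set set"
  assumes "simplicial_complex K" "\<And>s. s \<in> K \<Longrightarrow> aff_dim s \<le> 2" "finite Q"
  obtains c where "simplicial_centres K c" "\<And>s. s \<in> K \<Longrightarrow> s \<noteq> {} \<Longrightarrow> halving_centre Q s (c s)"
proof -
  define c where "c s = (SOME z. halving_centre Q s z)" for s
  have "halving_centre Q s (c s)" if s: "s \<in> K" "s \<noteq> {}" for s
  proof -
    obtain n where "n simplex s" using assms(1) s(1) unfolding simplicial_complex_def by blast
    then have "\<exists>z. halving_centre Q s z" using exists_halving_centre assms(2,3) s by blast
    then show ?thesis unfolding c_def by (rule someI_ex)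
  qed
  moreover from this have "simplicial_centres K c"
    using assms(1) by unfold_locales (auto simp: halving_centre_def)
  ultimately show ?thesis using that by blast
qed

section \<open>Iterated halving\<close>

context simplicial_centres
begin

lemma card_rel_interior_derived_le_half:
  assumes halving: "\<And>s. s \<in> K \<Longrightarrow> s \<noteq> {} \<Longrightarrow> halving_centre Q s (c s)" and "finite Q"
    and bound: "\<And>s. s \<in> K \<Longrightarrow> 1 \<le> aff_dim s \<Longrightarrow> card (Q \<inter> rel_interior s) \<le> N"
    and \<sigma>: "\<sigma> \<in> derived_complex c K" "1 \<le> aff_dim \<sigma>"
  shows "card (Q \<inter> rel_interior \<sigma>) \<le> N div 2"
proof -
  obtain F where F: "flag F" "\<sigma> = convex hull (c ` F)" using \<sigma>(1) unfolding derived_complex_eq by blast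
  define t where "t = \<Union>F"
  define g where "g = \<Union>(F - {t})"
  have below: "F - {t} \<noteq> {}"
  proof
    assume "F - {t} = {}"
    then have "c ` F \<subseteq> {c t}" by blast
    then have "aff_dim \<sigma> \<le> aff_dim {c t}" unfolding F(2) aff_dim_convex_hull by (rule aff_dim_subset)
    then show False using \<sigma>(2) by simp
  qed
  then have "F \<noteq> {}" by blast
  have t: "t \<in> K" "t \<noteq> {}" using Union_flag_in_complex[OF F(1) \<open>F \<noteq> {}\<close>] by (auto simp: t_def)
  have g: "g face_of t" "g \<noteq> t" "g \<noteq> {}"
    using flag_below_top_face_of[OF F(1) \<open>F \<noteq> {}\<close>]
      Union_flag_in_complex[OF flag_subset[OF F(1) Diff_subset] below[unfolded t_def]]
    unfolding g_def t_def by blast+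
  have "aff_dim g < aff_dim t" "0 \<le> aff_dim g"
    using face_of_aff_dim_lt[OF convex_member[OF t(1)] g(1,2)] g(3) by (auto simp flip: not_less)
  then have "card (Q \<inter> rel_interior t) \<le> N" using bound t(1) by simp
  moreover have "2 * card (Q \<inter> rel_interior t \<inter> open_join (c t) g) \<le> card (Q \<inter> rel_interior t)"
    using halving[OF t] g unfolding halving_centre_def by blast
  moreover have "rel_interior \<sigma> \<subseteq> rel_interior t" "rel_interior \<sigma> \<subseteq> open_join (c t) g"
    using rel_interior_convex_hull_flag_subset_top[OF F(1) \<open>F \<noteq> {}\<close>]
      rel_interior_convex_hull_flag_subset_open_join[OF F(1) below[unfolded t_def]]
    unfolding F(2) t_def g_def by simp_all
  then have "Q \<inter> rel_interior \<sigma> \<subseteq> Q \<inter> rel_interior t \<inter> open_join (c t) g" by blast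
  then have "card (Q \<inter> rel_interior \<sigma>) \<le> card (Q \<inter> rel_interior t \<inter> open_join (c t) g)"
    using \<open>finite Q\<close> by (simp add: card_mono)
  ultimately show ?thesis by linarith
qed

end

lemma iterated_halving:
  fixes K :: "'a::euclidean_space set set"
  assumes "simplicial_complex K" "\<And>s. s \<in> K \<Longrightarrow> aff_dim s \<le> 2" "finite Q"
    and "\<And>s. s \<in> K \<Longrightarrow> 1 \<le> aff_dim s \<Longrightarrow> card (Q \<inter> rel_interior s) \<le> N"
  shows "\<exists>S. realises_iterated_bsd K n S \<and> simplicial_complex S \<and> \<Union>S = \<Union>K \<and> (\<forall>\<sigma>\<in>S. aff_dim \<sigma> \<le> 2) \<and>
             (\<forall>\<sigma>\<in>S. 1 \<le> aff_dim \<sigma> \<longrightarrow> card (Q \<inter> rel_interior \<sigma>) \<le> N div 2 ^ n)"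
proof (induction n)
  case 0
  show ?case using assms(1,2,4) by (intro exI[of _ K]) auto
next
  case (Suc n)
  then obtain S where S: "realises_iterated_bsd K n S" "simplicial_complex S" "\<Union>S = \<Union>K"
    "\<And>\<sigma>. \<sigma> \<in> S \<Longrightarrow> aff_dim \<sigma> \<le> 2"
    "\<And>\<sigma>. \<sigma> \<in> S \<Longrightarrow> 1 \<le> aff_dim \<sigma> \<Longrightarrow> card (Q \<inter> rel_interior \<sigma>) \<le> N div 2 ^ n"
    by blast
  obtain c where c: "simplicial_centres S c" "\<And>s. s \<in> S \<Longrightarrow> s \<noteq> {} \<Longrightarrow> halving_centre Q s (c s)"
    using obtain_halving_centres[OF S(2) S(4) assms(3)] by blast
  interpret simplicial_centres S c by (rule c(1))
  have "realises_iterated_bsd K (Suc n) (derived_complex c S)"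
    using S(1) derived_subdivision_derived_complex by auto
  moreover have "aff_dim \<sigma> \<le> 2" if \<sigma>: "\<sigma> \<in> derived_complex c S" for \<sigma>
  proof (cases "\<sigma> = {}")
    case False
    then obtain s where "s \<in> S" "\<sigma> \<subseteq> s" by (rule derived_complex_subset_member[OF \<sigma>])
    then show ?thesis using S(4) aff_dim_subset by (meson order_trans)
  qed simp
  moreover have "card (Q \<inter> rel_interior \<sigma>) \<le> N div 2 ^ Suc n"
    if "\<sigma> \<in> derived_complex c S" "1 \<le> aff_dim \<sigma>" for \<sigma>
    using card_rel_interior_derived_le_half[OF c(2) assms(3) S(5) that]
    by (metis div_mult2_eq mult.commute power_Suc)
  ultimately show ?case
    using simplicial_complex_derived_complex Union_derived_complex S(3) by blast
qed

theorem mainTheorem19: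
  fixes D :: "(real^2) set" and \<T> :: "(real^2) set set" and k :: nat and P :: "(real^2) set"
  assumes "euclidean_polygon D"
    and "straight_triangulation \<T> D"
    and "finite P" and "card P \<le> 2 ^ k" and "P \<subseteq> D"
  shows "\<exists>\<S>. realises_iterated_bsd \<T> (k + 1) \<S> \<and> straight_triangulation \<S> D
             \<and> P \<subseteq> tri_vertices \<S>"
proof -
  have \<T>: "simplicial_complex \<T>" "\<Union>\<T> = D" using assms(2) by (simp_all add: straight_triangulation_def)
  have "aff_dim s \<le> 2" for s :: "(real^2) set" using aff_dim_le_DIM[of s] by simp
  moreover have "card (P \<inter> rel_interior s) \<le> 2 ^ k" for s
    using card_mono[OF assms(3), of "P \<inter> rel_interior s"] assms(4) by simp
  ultimately obtain \<S> where \<S>: "realises_iterated_bsd \<T> (k + 1) \<S>" "simplicial_complex \<S>" "\<Union>\<S> = D"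
    "\<And>\<sigma>. \<sigma> \<in> \<S> \<Longrightarrow> 1 \<le> aff_dim \<sigma> \<Longrightarrow> card (P \<inter> rel_interior \<sigma>) \<le> 2 ^ k div 2 ^ (k + 1)"
    using iterated_halving[OF \<T>(1) _ assms(3), of "2 ^ k" "k + 1"] \<T>(2) by blast
  have "p \<in> tri_vertices \<S>" if "p \<in> P" for p
  proof (rule mem_tri_vertices_if_not_in_rel_interiors[OF \<S>(2)])
    show "p \<in> \<Union>\<S>" using that assms(5) \<S>(3) by blast
    fix \<sigma> assume "\<sigma> \<in> \<S>" "1 \<le> aff_dim \<sigma>"
    then have "card (P \<inter> rel_interior \<sigma>) = 0" using \<S>(4) by simp
    then show "p \<notin> rel_interior \<sigma>" using that assms(3) by auto
  qed
  then show ?thesis using \<S> by (auto simp: straight_triangulation_def)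
qed

end
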